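(* Assume the standing setup with $\beta=1/\gamma$, where $\gamma$ satisfies (A1) and (A2), and let $Y(t)$ be the solution of the gradient flow of relative entropy with arbitrary initial data $Y_0$. If $t_i\to\infty$ is a sequence of times with $\operatorname{diam}Y(t_i)\to\infty$, then a subsequence of $Y(t_i)/\operatorname{diam}Y(t_i)$ converges to $Y_\infty=(y_1^\infty,\dots,y_n^\infty)\in(\mathbb{R}^s)^n$ consisting of $n$ pairwise distinct points.
   Context: Standing setup. Fix integers $s\ge 1$ and $n>s+1$. Let $\mathcal{P}_n=\{(i,j): i,j\in\{1,\dots,n\},\ i\neq j\}$. Let $(p_{ij})_{i\neq j}$ be a probability distribution on $\mathcal{P}_n$ (so $\sum_{i\neq j}p_{ij}=1$) with $p_{ij}=p_{ji}>0$ for all $i\neq j$. For points $Y=(y_1,\dots,y_n)$ with $y_i\in\mathbb{R}^s$ define $q_{ij}=\beta(|y_i-y_j|^2)/\sum_{k\neq \ell}\beta(|y_k-y_\ell|^2)$ for $i\neq j$, and the relative entropy $\mathcal{C}(Y)=\sum_{i\neq j}p_{ij}\log(p_{ij}/q_{ij})$. The gradient flow of $\mathcal{C}$ is the ODE system $$\frac{dy_i}{dt}=4\sum_{j\neq i}(p_{ij}-q_{ij})(y_i-y_j)(\log\beta)'(|y_i-y_j|^2),\qquad i=1,\dots,n,$$ with solution $Y(t)$ existing for all $t\ge0$. Conditions: (A1) $\gamma:[0,\infty)\to(0,\infty)$ is smooth and convex with $\gamma(0)=1$, $\gamma'\ge0$, $\lim_{x\to\infty}\gamma(x)=\infty$;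 (A2) $\sup_{x\ge0}(\log\gamma)'(x)<\infty$; and $\beta:=1/\gamma$. $\operatorname{diam}Y=\max_{i,j}|y_i-y_j|$. *)

theory Defs
  imports "HOL-Analysis.Analysis"
begin

text \<open>Configurations Y = (y_0, ..., y_(n-1)) are functions nat => 'a, only indices < n matter.\<close>

definition pairs :: "nat \<Rightarrow> (nat \<times> nat) set" where
  "pairs n = {(i, j). i < n \<and> j < n \<and> i \<noteq> j}"

definition beta_of :: "(real \<Rightarrow> real) \<Rightarrow> real \<Rightarrow> real" where
  "beta_of \<gamma> x = 1 / \<gamma> x"

definition qprob :: "(real \<Rightarrow> real) \<Rightarrow> nat \<Rightarrow> (nat \<Rightarrow> 'a::real_normed_vector) \<Rightarrow> nat \<Rightarrow> nat \<Rightarrow> real" where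
  "qprob \<beta> n Y i j = \<beta> ((norm (Y i - Y j))\<^sup>2) /
      (\<Sum>(k, l)\<in>pairs n. \<beta> ((norm (Y k - Y l))\<^sup>2))"

definition diamY :: "nat \<Rightarrow> (nat \<Rightarrow> 'a::real_normed_vector) \<Rightarrow> real" where
  "diamY n Y = Max {norm (Y i - Y j) | i j. i < n \<and> j < n}"

text \<open>Right-hand side of the gradient flow; dlogbeta is the derivative of log beta.\<close>
definition flow_rhs :: "(real \<Rightarrow> real) \<Rightarrow> (real \<Rightarrow> real) \<Rightarrow> nat \<Rightarrow> (nat \<Rightarrow> nat \<Rightarrow> real)
    \<Rightarrow> (nat \<Rightarrow> 'a::real_normed_vector) \<Rightarrow> nat \<Rightarrow> 'a" where
  "flow_rhs \<beta> dlogbeta n p Y i =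
     4 *\<^sub>R (\<Sum>j\<in>{..<n} - {i}. ((p i j - qprob \<beta> n Y i j) * dlogbeta ((norm (Y i - Y j))\<^sup>2))
              *\<^sub>R (Y i - Y j))"

end

theory Submission
  imports Defs
begin

text \<open>
  The cross entropy F(t) = - \<Sum> p_ij log q_ij(t) is a Lyapunov function of the flow: its
  derivative is - \<Sum>_i |dy_i/dt|^2, so F(t) \<le> F(0). All terms of F are nonnegative, hence every
  q_ij(t) stays above exp (- F(0) / p_ij), and all the values \<gamma>(|y_i - y_j|^2) are comparable,
  uniformly in time, with \<gamma>(diam^2). Convexity and \<gamma>(0) = 1 give \<gamma>(\<mu> D^2) \<le> 1 + \<mu> \<gamma>(D^2), so two
  rescaled points cannot merge (\<mu> \<rightarrow> 0) while \<gamma>(D^2) \<rightarrow> \<infinity>. The flow preserves the centre of mass,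
  so the rescaled configurations stay bounded and Bolzano-Weierstrass yields the subsequence.
\<close>

lemma has_real_derivative_norm_squared:
  fixes f :: "real \<Rightarrow> 'a::real_inner"
  assumes "(f has_vector_derivative f') (at t within S)"
  shows "((\<lambda>\<tau>. (norm (f \<tau>))\<^sup>2) has_real_derivative 2 * (f t \<bullet> f')) (at t within S)"
proof -
  have "((\<lambda>\<tau>. f \<tau> \<bullet> f \<tau>) has_derivative (\<lambda>h. f t \<bullet> (h *\<^sub>R f') + (h *\<^sub>R f') \<bullet> f t)) (at t within S)"
    using assms unfolding has_vector_derivative_def by (intro has_derivative_inner)
  moreover have "(\<lambda>h. f t \<bullet> (h *\<^sub>R f') + (h *\<^sub>R f') \<bullet> f t) = (*) (2 * (f t \<bullet> f'))"
    by (auto simp: fun_eq_iff inner_commute algebra_simps)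
  ultimately show ?thesis
    unfolding has_field_derivative_def power2_norm_eq_inner by simp
qed

lemma finite_pairs: "finite (pairs n)"
  by (rule finite_subset[of _ "{..<n} \<times> {..<n}"]) (auto simp: pairs_def)

lemma sum_pairs_nested: "(\<Sum>(i, j)\<in>pairs n. f i j) = (\<Sum>i<n. \<Sum>j\<in>{..<n} - {i}. f i j)"
proof -
  have "pairs n = Sigma {..<n} (\<lambda>i. {..<n} - {i})" by (auto simp: pairs_def)
  then show ?thesis by (simp add: sum.Sigma)
qed

lemma sum_pairs_swap: "(\<Sum>(i, j)\<in>pairs n. f i j) = (\<Sum>(i, j)\<in>pairs n. f j i)"
proof -
  have "prod.swap ` pairs n = pairs n" by (auto simp: pairs_def image_iff)
  then show ?thesis
    using sum.reindex[of prod.swap "pairs n" "case_prod f"] by (simp add: case_prod_beta)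
qed

lemma sum_pairs_antisym:
  fixes f :: "nat \<Rightarrow> nat \<Rightarrow> 'a::real_vector"
  assumes "\<And>i j. (i, j) \<in> pairs n \<Longrightarrow> f j i = - f i j"
  shows "(\<Sum>(i, j)\<in>pairs n. f i j) = 0"
proof -
  have "(\<Sum>(i, j)\<in>pairs n. f i j) = (\<Sum>(i, j)\<in>pairs n. - f i j)"
    by (subst sum_pairs_swap) (intro sum.cong refl, auto intro: assms)
  then show ?thesis
    by (simp add: sum_negf case_prod_beta eq_neg_iff_add_eq_0 flip: scaleR_2)
qed

lemma has_real_derivative_sum_pairs:
  assumes "\<And>i j. i < n \<Longrightarrow> j < n \<Longrightarrow> i \<noteq> j \<Longrightarrow> ((\<lambda>t. f t i j) has_real_derivative f' i j) F"
  shows "((\<lambda>t. \<Sum>(i, j)\<in>pairs n. f t i j) has_real_derivative (\<Sum>(i, j)\<in>pairs n. f' i j)) F"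
  by (rule DERIV_sum) (auto simp: pairs_def intro: assms)

lemma finite_diamY_set:
  fixes Z :: "nat \<Rightarrow> 'a::real_normed_vector"
  shows "finite {norm (Z i - Z j) | i j. i < n \<and> j < n}"
  by (rule finite_subset[of _ "(\<lambda>(i, j). norm (Z i - Z j)) ` ({..<n} \<times> {..<n})"]) auto

lemma norm_diff_le_diamY: "i < n \<Longrightarrow> j < n \<Longrightarrow> norm (Z i - Z j) \<le> diamY n Z"
  unfolding diamY_def by (rule Max_ge[OF finite_diamY_set]) auto

lemma diamY_attained: "n > 0 \<Longrightarrow> \<exists>i<n. \<exists>j<n. diamY n Z = norm (Z i - Z j)"
proof -
  assume "n > 0"
  then have "diamY n Z \<in> {norm (Z i - Z j) | i j. i < n \<and> j < n}"
    unfolding diamY_def by (intro Max_in finite_diamY_set) auto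
  then show ?thesis by auto
qed

lemma norm_le_diamY_plus_mean:
  fixes Z :: "nat \<Rightarrow> 'a::real_normed_vector"
  assumes "i < n"
  shows "norm (Z i) \<le> diamY n Z + norm (\<Sum>j<n. Z j) / n"
proof -
  have "real n *\<^sub>R Z i = (\<Sum>j<n. Z i - Z j) + (\<Sum>j<n. Z j)"
    by (simp add: sum_subtractf sum_constant_scaleR)
  then have "real n * norm (Z i) \<le> (\<Sum>j<n. norm (Z i - Z j)) + norm (\<Sum>j<n. Z j)"
    by (metis abs_of_nat add_right_mono norm_scaleR norm_sum norm_triangle_le)
  also have "(\<Sum>j<n. norm (Z i - Z j)) \<le> (\<Sum>j<n. diamY n Z)"
    using assms by (intro sum_mono norm_diff_le_diamY) auto
  finally show ?thesis
    using assms by (simp add: field_simps)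
qed

lemma convex_on_scaled_le:
  fixes f :: "real \<Rightarrow> real"
  assumes "convex_on {0..} f" "f 0 = 1" "0 \<le> \<mu>" "\<mu> \<le> 1" "0 \<le> x"
  shows "f (\<mu> * x) \<le> 1 + \<mu> * f x"
  using convex_onD[OF assms(1), of \<mu> 0 x] assms(2-5) by simp

lemma bounded_imp_common_convergent_subsequence:
  fixes f :: "nat \<Rightarrow> nat \<Rightarrow> 'a::heine_borel"
  assumes "\<And>i. i < m \<Longrightarrow> bounded (range (f i))"
  shows "\<exists>r. strict_mono r \<and> (\<forall>i<m. \<exists>l. (f i \<circ> r) \<longlonglongrightarrow> l)"
  using assms
proof (induction m)
  case 0
  show ?case by (auto intro: strict_mono_id)
next
  case (Suc m)
  have "\<exists>r. strict_mono r \<and> (\<forall>i<m. \<exists>l. (f i \<circ> r) \<longlonglongrightarrow> l)"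
    by (rule Suc.IH) (simp add: Suc.prems)
  then obtain r where r: "strict_mono r" "\<forall>i<m. \<exists>l. (f i \<circ> r) \<longlonglongrightarrow> l"
    by blast
  have "bounded (range (f m \<circ> r))"
    using Suc.prems[of m] by (rule bounded_subset) auto
  then obtain l r' where r': "strict_mono r'" "(f m \<circ> r \<circ> r') \<longlonglongrightarrow> l"
    using bounded_imp_convergent_subsequence by blast
  have "\<exists>l. (f i \<circ> (r \<circ> r')) \<longlonglongrightarrow> l" if i: "i < Suc m" for i
  proof (cases "i = m")
    case True
    then show ?thesis using r'(2) by (auto simp: o_assoc)
  next
    case False
    then obtain l' where "(f i \<circ> r) \<longlonglongrightarrow> l'" using r(2) i by (auto simp: less_Suc_eq)
    from LIMSEQ_subseq_LIMSEQ[OF this r'(1)] show ?thesis by (auto simp: o_assoc)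
  qed
  then show ?case
    using r(1) r'(1) strict_mono_o by blast
qed

lemma bounded_rescaled_configuration:
  fixes Z :: "nat \<Rightarrow> nat \<Rightarrow> 'a::real_normed_vector"
  assumes diam: "filterlim (\<lambda>k. diamY n (Z k)) at_top sequentially"
    and mean: "eventually (\<lambda>k. (\<Sum>j<n. Z k j) = m) sequentially"
    and i: "i < n"
  shows "bounded (range (\<lambda>k. (1 / diamY n (Z k)) *\<^sub>R Z k i))"
proof -
  have "eventually (\<lambda>k. 1 \<le> diamY n (Z k)) sequentially"
    using diam by (simp add: filterlim_at_top)
  with mean have "eventually (\<lambda>k. norm ((1 / diamY n (Z k)) *\<^sub>R Z k i) \<le> 1 + norm m / n) sequentially"
  proof eventually_elim
    case (elim k)
    let ?D = "diamY n (Z k)"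
    have "norm (Z k i) \<le> ?D + norm m / n"
      using norm_le_diamY_plus_mean[OF i, of "Z k"] elim(1) by simp
    also have "\<dots> \<le> ?D * (1 + norm m / n)"
      using mult_right_mono[OF elim(2), of "norm m / n"] by (simp add: algebra_simps)
    finally have "norm (Z k i) / ?D \<le> 1 + norm m / n"
      using elim(2) by (simp add: pos_divide_le_eq mult.commute)
    then show ?case
      using elim(2) by simp
  qed
  then show ?thesis
    unfolding Bseq_eq_bounded[symmetric] by (rule BfunI)
qed

lemma convex_comparable_bound:
  fixes \<gamma> :: "real \<Rightarrow> real"
  assumes convex: "convex_on {0..} \<gamma>" and gamma0: "\<gamma> 0 = 1"
    and "0 < D" "0 \<le> d" "d \<le> D"
    and comparable: "c * \<gamma> (D\<^sup>2) \<le> \<gamma> (d\<^sup>2)"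
  shows "(c - (d / D)\<^sup>2) * \<gamma> (D\<^sup>2) \<le> 1"
proof -
  have "(d / D)\<^sup>2 \<le> 1"
    using assms(3-5) by (simp add: power_le_one)
  have "\<gamma> (d\<^sup>2) = \<gamma> ((d / D)\<^sup>2 * D\<^sup>2)"
    using assms(3) by (simp add: power_divide)
  also have "\<dots> \<le> 1 + (d / D)\<^sup>2 * \<gamma> (D\<^sup>2)"
    using \<open>(d / D)\<^sup>2 \<le> 1\<close> by (intro convex_on_scaled_le[OF convex gamma0]) simp_all
  finally show ?thesis
    using comparable by (simp add: algebra_simps)
qed

lemma rescaled_limits_distinct:
  fixes Z :: "nat \<Rightarrow> nat \<Rightarrow> 'a::real_normed_vector" and \<gamma> :: "real \<Rightarrow> real"
  assumes convex: "convex_on {0..} \<gamma>" and gamma0: "\<gamma> 0 = 1"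
    and gamma_lim: "filterlim \<gamma> at_top at_top"
    and diam: "filterlim (\<lambda>k. diamY n (Z k)) at_top sequentially"
    and c: "c > 0"
    and comparable: "eventually (\<lambda>k. c * \<gamma> ((diamY n (Z k))\<^sup>2) \<le> \<gamma> ((norm (Z k i - Z k j))\<^sup>2)) sequentially"
    and ij: "i < n" "j < n"
    and lim_i: "((\<lambda>k. (1 / diamY n (Z k)) *\<^sub>R Z k i) \<longlongrightarrow> y) sequentially"
    and lim_j: "((\<lambda>k. (1 / diamY n (Z k)) *\<^sub>R Z k j) \<longlongrightarrow> y') sequentially"
  shows "y \<noteq> y'"
proof
  assume "y = y'"
  define D where "D k = diamY n (Z k)" for k
  define \<mu> where "\<mu> k = (norm ((1 / D k) *\<^sub>R (Z k i - Z k j)))\<^sup>2" for k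
  have "((\<lambda>k. (1 / D k) *\<^sub>R (Z k i - Z k j)) \<longlongrightarrow> 0) sequentially"
    using tendsto_diff[OF lim_i lim_j] \<open>y = y'\<close> by (simp add: D_def scaleR_diff_right)
  then have "(\<mu> \<longlongrightarrow> 0) sequentially"
    unfolding \<mu>_def using tendsto_power[OF tendsto_norm, of _ 0 _ 2] by force
  then have "filterlim (\<lambda>k. (c - \<mu> k) * \<gamma> ((D k)\<^sup>2)) at_top sequentially"
    using c unfolding D_def
    by (intro filterlim_tendsto_pos_mult_at_top[OF tendsto_diff[OF tendsto_const]]
        filterlim_compose[OF gamma_lim filterlim_pow_at_top[OF _ diam]]) simp_all
  then have large: "eventually (\<lambda>k. 2 \<le> (c - \<mu> k) * \<gamma> ((D k)\<^sup>2)) sequentially"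
    by (simp add: filterlim_at_top)
  have "eventually (\<lambda>k. 1 \<le> D k) sequentially"
    using diam by (simp add: filterlim_at_top D_def)
  then have bounded: "eventually (\<lambda>k. (c - \<mu> k) * \<gamma> ((D k)\<^sup>2) \<le> 1) sequentially"
    using comparable unfolding D_def
  proof eventually_elim
    case (elim k)
    have scaled: "norm ((1 / D k) *\<^sub>R (Z k i - Z k j)) = norm (Z k i - Z k j) / D k"
      using elim(1) by (simp add: D_def)
    have "(c - (norm (Z k i - Z k j) / D k)\<^sup>2) * \<gamma> ((D k)\<^sup>2) \<le> 1"
      using elim norm_diff_le_diamY[OF ij, of "Z k"]
      by (intro convex_comparable_bound[OF convex gamma0]) (auto simp: D_def)
    then show ?case
      unfolding \<mu>_def D_def scaled[unfolded D_def] .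
  qed
  from large bounded have "eventually (\<lambda>k. False) sequentially"
    by eventually_elim simp
  then show False
    by simp
qed

lemma rescaled_configurations_limit_distinct:
  fixes Z :: "nat \<Rightarrow> nat \<Rightarrow> 'a::euclidean_space" and \<gamma> :: "real \<Rightarrow> real"
  assumes convex: "convex_on {0..} \<gamma>" and gamma0: "\<gamma> 0 = 1"
    and gamma_lim: "filterlim \<gamma> at_top at_top"
    and diam: "filterlim (\<lambda>k. diamY n (Z k)) at_top sequentially"
    and mean: "eventually (\<lambda>k. (\<Sum>j<n. Z k j) = m) sequentially"
    and c: "c > 0"
    and comparable: "eventually (\<lambda>k. \<forall>i<n. \<forall>j<n. i \<noteq> j \<longrightarrow>
          c * \<gamma> ((diamY n (Z k))\<^sup>2) \<le> \<gamma> ((norm (Z k i - Z k j))\<^sup>2)) sequentially"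
  shows "\<exists>r Yinf. strict_mono r \<and>
    (\<forall>i<n. ((\<lambda>k. (1 / diamY n (Z (r k))) *\<^sub>R Z (r k) i) \<longlongrightarrow> Yinf i) sequentially) \<and>
    (\<forall>i<n. \<forall>j<n. i \<noteq> j \<longrightarrow> Yinf i \<noteq> Yinf j)"
proof -
  define f where "f i k = (1 / diamY n (Z k)) *\<^sub>R Z k i" for i k
  obtain r where r: "strict_mono r" and "\<forall>i<n. \<exists>l. (f i \<circ> r) \<longlonglongrightarrow> l"
    using bounded_imp_common_convergent_subsequence[of n f] bounded_rescaled_configuration[OF diam mean]
    unfolding f_def by blast
  then obtain Yinf where lim: "\<forall>i<n. (f i \<circ> r) \<longlonglongrightarrow> Yinf i"
    by metis
  have sub: "filterlim r sequentially sequentially"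
    using r by (rule filterlim_subseq)
  have "Yinf i \<noteq> Yinf j" if ij: "i < n" "j < n" "i \<noteq> j" for i j
  proof (rule rescaled_limits_distinct[where Z="\<lambda>k. Z (r k)", OF convex gamma0 gamma_lim _ c _ ij(1,2)])
    show "filterlim (\<lambda>k. diamY n (Z (r k))) at_top sequentially"
      using filterlim_compose[OF diam sub] .
    show "eventually (\<lambda>k. c * \<gamma> ((diamY n (Z (r k)))\<^sup>2) \<le> \<gamma> ((norm (Z (r k) i - Z (r k) j))\<^sup>2)) sequentially"
      using filterlim_iff[THEN iffD1, OF sub, rule_format, OF comparable] ij
      by (auto elim: eventually_mono)
    show "((\<lambda>k. (1 / diamY n (Z (r k))) *\<^sub>R Z (r k) i) \<longlongrightarrow> Yinf i) sequentially"
      "((\<lambda>k. (1 / diamY n (Z (r k))) *\<^sub>R Z (r k) j) \<longlongrightarrow> Yinf j) sequentially"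
      using lim ij by (simp_all add: f_def o_def)
  qed
  with r lim show ?thesis
    unfolding f_def o_def by blast
qed

locale entropy_gradient_flow =
  fixes n :: nat and p :: "nat \<Rightarrow> nat \<Rightarrow> real" and \<gamma> \<gamma>' :: "real \<Rightarrow> real"
    and Y :: "real \<Rightarrow> nat \<Rightarrow> 'a::euclidean_space"
  assumes two_le_n: "2 \<le> n"
    and p_sym: "\<And>i j. i < n \<Longrightarrow> j < n \<Longrightarrow> i \<noteq> j \<Longrightarrow> p i j = p j i"
    and p_pos: "\<And>i j. i < n \<Longrightarrow> j < n \<Longrightarrow> i \<noteq> j \<Longrightarrow> p i j > 0"
    and p_sum: "(\<Sum>(i, j)\<in>pairs n. p i j) = 1"
    and gamma_deriv: "\<And>x. x \<ge> 0 \<Longrightarrow> (\<gamma> has_real_derivative \<gamma>' x) (at x within {0..})"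
    and gamma_pos: "\<And>x. x \<ge> 0 \<Longrightarrow> \<gamma> x > 0"
    and flow: "\<And>t i. t \<ge> 0 \<Longrightarrow> i < n \<Longrightarrow>
       ((\<lambda>\<tau>. Y \<tau> i) has_vector_derivative
          flow_rhs (beta_of \<gamma>) (\<lambda>x. - (\<gamma>' x / \<gamma> x)) n p (Y t) i) (at t within {0..})"
begin

definition sqdist :: "real \<Rightarrow> nat \<Rightarrow> nat \<Rightarrow> real"
  where "sqdist t i j = (norm (Y t i - Y t j))\<^sup>2"

definition normalizer :: "real \<Rightarrow> real"
  where "normalizer t = (\<Sum>(k, l)\<in>pairs n. 1 / \<gamma> (sqdist t k l))"

definition q :: "real \<Rightarrow> nat \<Rightarrow> nat \<Rightarrow> real"
  where "q t i j = 1 / \<gamma> (sqdist t i j) / normalizer t"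

definition velocity :: "real \<Rightarrow> nat \<Rightarrow> 'a"
  where "velocity t i = flow_rhs (beta_of \<gamma>) (\<lambda>x. - (\<gamma>' x / \<gamma> x)) n p (Y t) i"

definition force_coeff :: "real \<Rightarrow> nat \<Rightarrow> nat \<Rightarrow> real"
  where "force_coeff t i j = (p i j - q t i j) * (\<gamma>' (sqdist t i j) / \<gamma> (sqdist t i j))"

definition sqdist_rate :: "real \<Rightarrow> nat \<Rightarrow> nat \<Rightarrow> real"
  where "sqdist_rate t i j = 2 * ((Y t i - Y t j) \<bullet> (velocity t i - velocity t j))"

text \<open>The cross entropy differs from the relative entropy of the paper by the constant \<Sum> p_ij log p_ij.\<close>
definition cross_entropy :: "real \<Rightarrow> real"
  where "cross_entropy t = (\<Sum>(i, j)\<in>pairs n. - p i j * ln (q t i j))"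

lemma gamma_sqdist_pos: "\<gamma> (sqdist t i j) > 0"
  by (simp add: gamma_pos sqdist_def)

lemma zero_one_in_pairs: "(0, 1) \<in> pairs n"
  using two_le_n by (auto simp: pairs_def)

lemma normalizer_pos: "normalizer t > 0"
  unfolding normalizer_def using zero_one_in_pairs
  by (intro sum_pos2[where i="(0, 1)"]) (auto simp: finite_pairs gamma_sqdist_pos less_imp_le)

lemma inverse_gamma_le_normalizer:
  assumes "(i, j) \<in> pairs n"
  shows "1 / \<gamma> (sqdist t i j) \<le> normalizer t"
proof -
  have "0 \<le> (case x of (k, l) \<Rightarrow> 1 / \<gamma> (sqdist t k l))" for x
    by (cases x) (simp add: gamma_sqdist_pos less_imp_le)
  then show ?thesis
    unfolding normalizer_def
    using member_le_sum[OF assms, of "\<lambda>(k, l). 1 / \<gamma> (sqdist t k l)"] by (simp add: finite_pairs)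
qed

lemma q_pos: "q t i j > 0"
  by (simp add: q_def gamma_sqdist_pos normalizer_pos)

lemma q_le_1: "(i, j) \<in> pairs n \<Longrightarrow> q t i j \<le> 1"
  using inverse_gamma_le_normalizer[of i j t] normalizer_pos[of t] gamma_sqdist_pos[of t i j]
  by (simp add: q_def field_simps)

lemma force_coeff_commute: "force_coeff t j i = force_coeff t i j" if "(i, j) \<in> pairs n"
  using that p_sym[of i j] by (simp add: force_coeff_def q_def sqdist_def norm_minus_commute pairs_def)

lemma velocity_eq: "velocity t i = - 4 *\<^sub>R (\<Sum>j\<in>{..<n} - {i}. force_coeff t i j *\<^sub>R (Y t i - Y t j))"
proof -
  have "qprob (beta_of \<gamma>) n (Y t) i j = q t i j" for j
    by (simp add: qprob_def beta_of_def q_def normalizer_def sqdist_def)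
  then have "velocity t i = 4 *\<^sub>R (\<Sum>j\<in>{..<n} - {i}. - (force_coeff t i j *\<^sub>R (Y t i - Y t j)))"
    unfolding velocity_def flow_rhs_def
    by (intro arg_cong[where f="\<lambda>x. 4 *\<^sub>R x"] sum.cong refl) (simp add: force_coeff_def sqdist_def)
  then show ?thesis
    by (simp add: sum_negf)
qed

lemma sum_velocity: "(\<Sum>i<n. velocity t i) = 0"
proof -
  have "(\<Sum>(i, j)\<in>pairs n. force_coeff t i j *\<^sub>R (Y t i - Y t j)) = 0"
    by (rule sum_pairs_antisym) (simp add: force_coeff_commute scaleR_diff_right)
  then show ?thesis
    by (simp add: velocity_eq sum_pairs_nested sum_negf flip: scaleR_sum_right)
qed

lemma centre_of_mass_const:
  assumes "t \<ge> 0"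
  shows "(\<Sum>i<n. Y t i) = (\<Sum>i<n. Y 0 i)"
proof -
  have "\<exists>c. \<forall>\<tau>\<in>{0::real..}. (\<Sum>i<n. Y \<tau> i) = c"
  proof (rule has_derivative_zero_constant)
    fix \<tau> :: real assume "\<tau> \<in> {0..}"
    then have "((\<lambda>\<tau>. \<Sum>i<n. Y \<tau> i) has_vector_derivative (\<Sum>i<n. velocity \<tau> i)) (at \<tau> within {0..})"
      unfolding velocity_def by (intro has_vector_derivative_sum flow) auto
    then show "((\<lambda>\<tau>. \<Sum>i<n. Y \<tau> i) has_derivative (\<lambda>h. 0)) (at \<tau> within {0..})"
      by (simp add: sum_velocity has_vector_derivative_def)
  qed auto
  then show ?thesis
    using assms by force
qed

lemma sqdist_deriv:
  assumes "t \<ge> 0" "i < n" "j < n"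
  shows "((\<lambda>\<tau>. sqdist \<tau> i j) has_real_derivative sqdist_rate t i j) (at t within {0..})"
  unfolding sqdist_def sqdist_rate_def velocity_def
  by (rule has_real_derivative_norm_squared) (intro has_vector_derivative_diff flow assms)

lemma gamma_sqdist_deriv:
  assumes "t \<ge> 0" "i < n" "j < n"
  shows "((\<lambda>\<tau>. \<gamma> (sqdist \<tau> i j)) has_real_derivative \<gamma>' (sqdist t i j) * sqdist_rate t i j)
    (at t within {0..})"
proof -
  have "(\<gamma> has_real_derivative \<gamma>' (sqdist t i j)) (at (sqdist t i j) within (\<lambda>\<tau>. sqdist \<tau> i j) ` {0..})"
    by (rule has_field_derivative_subset[OF gamma_deriv]) (auto simp: sqdist_def)
  from DERIV_image_chain[OF this sqdist_deriv[OF assms]] show ?thesis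
    by (simp add: o_def)
qed

lemma ln_gamma_sqdist_deriv:
  assumes "t \<ge> 0" "i < n" "j < n"
  shows "((\<lambda>\<tau>. ln (\<gamma> (sqdist \<tau> i j))) has_real_derivative
    \<gamma>' (sqdist t i j) / \<gamma> (sqdist t i j) * sqdist_rate t i j) (at t within {0..})"
  by (rule DERIV_cong[OF DERIV_chain2[OF DERIV_ln_divide[OF gamma_sqdist_pos] gamma_sqdist_deriv[OF assms]]])
    simp

lemma inverse_gamma_sqdist_deriv:
  assumes "t \<ge> 0" "i < n" "j < n"
  shows "((\<lambda>\<tau>. 1 / \<gamma> (sqdist \<tau> i j)) has_real_derivative
    - (1 / \<gamma> (sqdist t i j)) * (\<gamma>' (sqdist t i j) / \<gamma> (sqdist t i j) * sqdist_rate t i j)) (at t within {0..})"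
  using gamma_sqdist_pos[of t i j]
  by (intro DERIV_cong[OF DERIV_divide[OF DERIV_const gamma_sqdist_deriv[OF assms]]])
    (simp_all add: field_simps power2_eq_square)

lemma ln_normalizer_deriv:
  assumes "t \<ge> 0"
  shows "((\<lambda>\<tau>. ln (normalizer \<tau>)) has_real_derivative
    - (\<Sum>(i, j)\<in>pairs n. q t i j * (\<gamma>' (sqdist t i j) / \<gamma> (sqdist t i j)) * sqdist_rate t i j))
    (at t within {0..})"
proof -
  have "(normalizer has_real_derivative
      (\<Sum>(i, j)\<in>pairs n. - (1 / \<gamma> (sqdist t i j)) * (\<gamma>' (sqdist t i j) / \<gamma> (sqdist t i j) * sqdist_rate t i j)))
      (at t within {0..})"
    unfolding normalizer_def by (intro has_real_derivative_sum_pairs inverse_gamma_sqdist_deriv assms)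
  from DERIV_chain2[OF DERIV_ln_divide[OF normalizer_pos] this] show ?thesis
    by (rule DERIV_cong) (simp add: q_def sum_distrib_left sum_negf case_prod_beta mult_ac)
qed

lemma cross_entropy_eq:
  "cross_entropy t = (\<Sum>(i, j)\<in>pairs n. p i j * ln (\<gamma> (sqdist t i j))) + ln (normalizer t)"
proof -
  have ln_q: "ln (q t i j) = - (ln (\<gamma> (sqdist t i j)) + ln (normalizer t))" for i j
    using normalizer_pos[of t] gamma_sqdist_pos[of t i j] by (simp add: q_def ln_div ln_mult)
  have "cross_entropy t = (\<Sum>(i, j)\<in>pairs n. p i j * ln (\<gamma> (sqdist t i j)) + p i j * ln (normalizer t))"
    unfolding cross_entropy_def by (intro sum.cong refl) (auto simp: ln_q algebra_simps)
  then show ?thesis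
    using p_sum by (simp add: sum.distrib case_prod_beta flip: sum_distrib_right)
qed

lemma cross_entropy_has_derivative_sum:
  assumes "t \<ge> 0"
  shows "(cross_entropy has_real_derivative (\<Sum>(i, j)\<in>pairs n. force_coeff t i j * sqdist_rate t i j))
    (at t within {0..})"
proof -
  have "((\<lambda>\<tau>. \<Sum>(i, j)\<in>pairs n. p i j * ln (\<gamma> (sqdist \<tau> i j))) has_real_derivative
      (\<Sum>(i, j)\<in>pairs n. p i j * (\<gamma>' (sqdist t i j) / \<gamma> (sqdist t i j) * sqdist_rate t i j)))
      (at t within {0..})"
    by (intro has_real_derivative_sum_pairs DERIV_cmult ln_gamma_sqdist_deriv assms)
  from DERIV_add[OF this ln_normalizer_deriv[OF assms]] show ?thesis
    unfolding cross_entropy_eq[abs_def]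
    by (rule DERIV_cong)
      (simp add: force_coeff_def sum_subtractf[symmetric] case_prod_beta algebra_simps diff_divide_distrib)
qed

lemma sum_force_coeff_sqdist_rate:
  "(\<Sum>(i, j)\<in>pairs n. force_coeff t i j * sqdist_rate t i j) = - (\<Sum>i<n. (norm (velocity t i))\<^sup>2)"
proof -
  define g where "g i j = force_coeff t i j * ((Y t i - Y t j) \<bullet> velocity t i)" for i j
  have "force_coeff t i j * sqdist_rate t i j = 2 * (g i j + g j i)" if "(i, j) \<in> pairs n" for i j
    using force_coeff_commute[OF that]
    by (simp add: g_def sqdist_rate_def inner_diff_left inner_diff_right algebra_simps)
  then have "(\<Sum>(i, j)\<in>pairs n. force_coeff t i j * sqdist_rate t i j) = (\<Sum>(i, j)\<in>pairs n. 2 * (g i j + g j i))"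
    by (intro sum.cong refl) auto
  also have "\<dots> = 4 * (\<Sum>(i, j)\<in>pairs n. g i j)"
    using sum_pairs_swap[of "\<lambda>i j. g j i" n]
    by (simp add: sum.distrib case_prod_beta flip: sum_distrib_left)
  also have "\<dots> = 4 * (\<Sum>i<n. (\<Sum>j\<in>{..<n} - {i}. force_coeff t i j *\<^sub>R (Y t i - Y t j)) \<bullet> velocity t i)"
    by (simp add: g_def sum_pairs_nested inner_sum_left)
  also have "\<dots> = - (\<Sum>i<n. (norm (velocity t i))\<^sup>2)"
  proof -
    have "(\<Sum>j\<in>{..<n} - {i}. force_coeff t i j *\<^sub>R (Y t i - Y t j)) = - (1 / 4) *\<^sub>R velocity t i" for i
      by (simp add: velocity_eq)
    then show ?thesis
      by (simp add: power2_norm_eq_inner sum_distrib_left sum_negf)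
  qed
  finally show ?thesis .
qed

lemma cross_entropy_deriv:
  "t \<ge> 0 \<Longrightarrow> (cross_entropy has_real_derivative - (\<Sum>i<n. (norm (velocity t i))\<^sup>2)) (at t within {0..})"
  using cross_entropy_has_derivative_sum by (simp add: sum_force_coeff_sqdist_rate)

lemma cross_entropy_le_initial:
  assumes "t \<ge> 0"
  shows "cross_entropy t \<le> cross_entropy 0"
proof (rule DERIV_nonpos_imp_decreasing_open[OF assms])
  fix \<tau> :: real
  assume "0 < \<tau>" "\<tau> < t"
  then have "(cross_entropy has_real_derivative - (\<Sum>i<n. (norm (velocity \<tau> i))\<^sup>2)) (at \<tau>)"
    using cross_entropy_deriv[of \<tau>] at_within_interior[of \<tau> "{0..}"] by simp
  then show "\<exists>y. (cross_entropy has_real_derivative y) (at \<tau>) \<and> y \<le> 0"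
    by (force intro: sum_nonneg)
next
  have "continuous_on {0..} cross_entropy"
    unfolding continuous_on_eq_continuous_within using cross_entropy_deriv DERIV_continuous by blast
  then show "continuous_on {0..t} cross_entropy"
    by (rule continuous_on_subset) auto
qed

lemma q_lower_bound:
  assumes "t \<ge> 0" "(i, j) \<in> pairs n"
  shows "exp (- cross_entropy 0 / p i j) \<le> q t i j"
proof -
  have p: "p i j > 0"
    using assms(2) p_pos by (auto simp: pairs_def)
  have "0 \<le> (case x of (k, l) \<Rightarrow> - p k l * ln (q t k l))" if "x \<in> pairs n" for x
  proof (cases x)
    case (Pair k l)
    then have "0 < p k l" "ln (q t k l) \<le> 0"
      using that p_pos q_le_1 q_pos by (auto simp: pairs_def)
    then show ?thesis
      using Pair mult_nonneg_nonpos[of "p k l" "ln (q t k l)"] by simp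
  qed
  then have "- p i j * ln (q t i j) \<le> cross_entropy t"
    unfolding cross_entropy_def
    using member_le_sum[OF assms(2), of "\<lambda>(k, l). - p k l * ln (q t k l)"] by (simp add: finite_pairs)
  also have "\<dots> \<le> cross_entropy 0"
    using assms(1) by (rule cross_entropy_le_initial)
  finally have "- cross_entropy 0 / p i j \<le> ln (q t i j)"
    using p by (simp add: field_simps)
  then show ?thesis
    using q_pos by (metis exp_le_cancel_iff exp_ln)
qed

lemma gamma_le_of_q_ge:
  assumes "c \<le> q t a b" "(i, j) \<in> pairs n"
  shows "c * \<gamma> (sqdist t a b) \<le> \<gamma> (sqdist t i j)"
proof -
  note pos = normalizer_pos[of t] gamma_sqdist_pos[of t a b] gamma_sqdist_pos[of t i j]
  have "c * \<gamma> (sqdist t a b) \<le> 1 / normalizer t"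
    using assms(1) pos by (simp add: q_def field_simps)
  also have "\<dots> \<le> \<gamma> (sqdist t i j)"
    using inverse_gamma_le_normalizer[OF assms(2), of t] pos by (simp add: field_simps)
  finally show ?thesis .
qed

lemma diamY_sq_eq_sqdist: "\<exists>(a, b)\<in>pairs n. (diamY n (Y t))\<^sup>2 = sqdist t a b"
proof -
  obtain a b where ab: "a < n" "b < n" "diamY n (Y t) = norm (Y t a - Y t b)"
    using diamY_attained[of n "Y t"] two_le_n by auto
  show ?thesis
  proof (cases "a = b")
    case True
    then have "norm (Y t 0 - Y t 1) \<le> 0"
      using norm_diff_le_diamY[of 0 n 1 "Y t"] ab two_le_n by simp
    then have "(diamY n (Y t))\<^sup>2 = sqdist t 0 1"
      using ab True by (simp add: sqdist_def)
    with zero_one_in_pairs show ?thesis by blast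
  next
    case False
    then show ?thesis
      using ab by (auto simp: sqdist_def pairs_def)
  qed
qed

lemma gamma_diam_comparable:
  "\<exists>c>0. \<forall>t\<ge>0. \<forall>i<n. \<forall>j<n. i \<noteq> j \<longrightarrow> c * \<gamma> ((diamY n (Y t))\<^sup>2) \<le> \<gamma> (sqdist t i j)"
proof -
  define c where "c = Min ((\<lambda>(i, j). exp (- cross_entropy 0 / p i j)) ` pairs n)"
  have "c > 0"
    unfolding c_def using finite_pairs zero_one_in_pairs by (subst Min_gr_iff) auto
  moreover have "c * \<gamma> ((diamY n (Y t))\<^sup>2) \<le> \<gamma> (sqdist t i j)"
    if "t \<ge> 0" "i < n" "j < n" "i \<noteq> j" for t i j
  proof -
    obtain a b where ab: "(a, b) \<in> pairs n" "(diamY n (Y t))\<^sup>2 = sqdist t a b"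
      using diamY_sq_eq_sqdist by blast
    have "c \<le> exp (- cross_entropy 0 / p a b)"
      unfolding c_def using ab(1) finite_pairs by (intro Min_le) force+
    also have "\<dots> \<le> q t a b"
      using q_lower_bound[OF that(1) ab(1)] .
    finally show ?thesis
      using gamma_le_of_q_ge[of c t a b i j] that ab(2) by (simp add: pairs_def)
  qed
  ultimately show ?thesis
    by blast
qed


lemma rescaled_trajectory_limit_distinct:
  assumes convex: "convex_on {0..} \<gamma>" and gamma0: "\<gamma> 0 = 1"
    and gamma_lim: "filterlim \<gamma> at_top at_top"
    and tt: "filterlim tt at_top sequentially"
    and diam: "filterlim (\<lambda>k. diamY n (Y (tt k))) at_top sequentially"
  shows "\<exists>r Yinf. strict_mono r \<and>
    (\<forall>i<n. ((\<lambda>k. (1 / diamY n (Y (tt (r k)))) *\<^sub>R Y (tt (r k)) i) \<longlongrightarrow> Yinf i) sequentially) \<and>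
    (\<forall>i<n. \<forall>j<n. i \<noteq> j \<longrightarrow> Yinf i \<noteq> Yinf j)"
proof -
  obtain c where c: "c > 0" and comparable: "\<And>t i j. t \<ge> 0 \<Longrightarrow> i < n \<Longrightarrow> j < n \<Longrightarrow> i \<noteq> j \<Longrightarrow>
      c * \<gamma> ((diamY n (Y t))\<^sup>2) \<le> \<gamma> ((norm (Y t i - Y t j))\<^sup>2)"
    using gamma_diam_comparable unfolding sqdist_def by blast
  have t_nonneg: "eventually (\<lambda>k. 0 \<le> tt k) sequentially"
    using tt by (simp add: filterlim_at_top)
  then have "eventually (\<lambda>k. (\<Sum>j<n. Y (tt k) j) = (\<Sum>j<n. Y 0 j)) sequentially"
    by eventually_elim (rule centre_of_mass_const)
  moreover from t_nonneg have "eventually (\<lambda>k. \<forall>i<n. \<forall>j<n. i \<noteq> j \<longrightarrow>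
      c * \<gamma> ((diamY n (Y (tt k)))\<^sup>2) \<le> \<gamma> ((norm (Y (tt k) i - Y (tt k) j))\<^sup>2)) sequentially"
    by eventually_elim (blast intro: comparable)
  ultimately show ?thesis
    using rescaled_configurations_limit_distinct[OF convex gamma0 gamma_lim diam _ c] by blast
qed

end

theorem theorem1p3:
  fixes n :: nat
    and p :: "nat \<Rightarrow> nat \<Rightarrow> real"
    and \<gamma> :: "real \<Rightarrow> real"
    and D :: "nat \<Rightarrow> real \<Rightarrow> real"
    and Y :: "real \<Rightarrow> nat \<Rightarrow> 'a::euclidean_space"
  assumes n_gt: "n > DIM('a) + 1"
    and p_sym: "\<And>i j. i < n \<Longrightarrow> j < n \<Longrightarrow> i \<noteq> j \<Longrightarrow> p i j = p j i"
    and p_pos: "\<And>i j. i < n \<Longrightarrow> j < n \<Longrightarrow> i \<noteq> j \<Longrightarrow> p i j > 0"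
    and p_sum: "(\<Sum>(i, j)\<in>pairs n. p i j) = 1"
    and D0: "D 0 = \<gamma>"
    and smooth: "\<And>k x. x \<ge> 0 \<Longrightarrow> (D k has_real_derivative D (Suc k) x) (at x within {0..})"
    and gamma_pos: "\<And>x. x \<ge> 0 \<Longrightarrow> \<gamma> x > 0"
    and convex: "convex_on {0..} \<gamma>"
    and gamma0: "\<gamma> 0 = 1"
    and gamma_mono: "\<And>x. x \<ge> 0 \<Longrightarrow> D 1 x \<ge> 0"
    and gamma_lim: "filterlim \<gamma> at_top at_top"
    and A2: "bdd_above ((\<lambda>x. D 1 x / \<gamma> x) ` {0..})"
    and flow: "\<And>t i. t \<ge> 0 \<Longrightarrow> i < n \<Longrightarrow>
       ((\<lambda>\<tau>. Y \<tau> i) has_vector_derivative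
          flow_rhs (beta_of \<gamma>) (\<lambda>x. - (D 1 x / \<gamma> x)) n p (Y t) i) (at t within {0..})"
  shows "\<forall>tt :: nat \<Rightarrow> real. filterlim tt at_top sequentially \<longrightarrow>
           filterlim (\<lambda>k. diamY n (Y (tt k))) at_top sequentially \<longrightarrow>
           (\<exists>r Yinf. strict_mono r \<and>
              (\<forall>i<n. ((\<lambda>k. (1 / diamY n (Y (tt (r k)))) *\<^sub>R Y (tt (r k)) i) \<longlongrightarrow> Yinf i) sequentially) \<and>
              (\<forall>i<n. \<forall>j<n. i \<noteq> j \<longrightarrow> Yinf i \<noteq> Yinf j))"
proof -
  interpret entropy_gradient_flow n p \<gamma> "D 1" Y
  proof
    show "2 \<le> n"
      using n_gt DIM_positive[where 'a='a] by linarith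
    show "(\<gamma> has_real_derivative D 1 x) (at x within {0..})" if "x \<ge> 0" for x
      using smooth[OF that, of 0] D0 by simp
  qed (fact p_sym p_pos p_sum gamma_pos flow)+
  show ?thesis
    using rescaled_trajectory_limit_distinct[OF convex gamma0 gamma_lim] by blast
qed

end
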